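(* Let $\mathcal C$ be a hereditary class of graphs with infinite VC-dimension and let $H=(A\cup B,E)$ be a bipartite graph with bipartition $(A,B)$. Then $\mathcal C$ contains a graph $G$ whose vertex set admits a partition $(A',B')$ such that deleting from $G$ all edges with both ends in $A'$ and all edges with both ends in $B'$ yields a graph isomorphic to $H$ via an isomorphism mapping $A'$ onto $A$ and $B'$ onto $B$ (i.e. $H$ is a bipartisation of $G$).
   Context: A class of graphs is hereditary if it is closed under isomorphism and under taking induced subgraphs. For a graph $G$ and $v\in V(G)$, $N[v]$ is the closed neighbourhood. A set $X\subseteq V(G)$ is shattered if for every $S\subseteq X$ there is a vertex $v$ with $N[v]\cap X=S$; the VC-dimension of $G$ is the largest size of a shattered set; a class has infinite VC-dimension if these are unbounded over the class. A bipartite graph $H=(A\cup B,E)$ is a bipartisation of $G$ if for some partition $(A,B)$ of $V(G)$, removing all edges inside $A$ and inside $B$ from $G$ yields $H$. *)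

theory Defs
  imports Main
begin

text \<open>A (finite simple) graph is a pair (V, E) of a finite vertex set and a
symmetric irreflexive edge relation on V (each edge stored in both directions).\<close>

type_synonym 'a graph = "'a set \<times> ('a \<times> 'a) set"

definition verts :: "'a graph \<Rightarrow> 'a set" where "verts G = fst G"
definition edges :: "'a graph \<Rightarrow> ('a \<times> 'a) set" where "edges G = snd G"

definition is_graph :: "'a graph \<Rightarrow> bool" where
  "is_graph G \<longleftrightarrow> finite (verts G) \<and> edges G \<subseteq> verts G \<times> verts G
     \<and> (\<forall>u v. (u, v) \<in> edges G \<longrightarrow> (v, u) \<in> edges G)
     \<and> (\<forall>v. (v, v) \<notin> edges G)"

definition graph_iso :: "('a \<Rightarrow> 'b) \<Rightarrow> 'a graph \<Rightarrow> 'b graph \<Rightarrow> bool" where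
  "graph_iso f G H \<longleftrightarrow> bij_betw f (verts G) (verts H)
     \<and> (\<forall>u\<in>verts G. \<forall>v\<in>verts G. (u, v) \<in> edges G \<longleftrightarrow> (f u, f v) \<in> edges H)"

definition induced_subgraph :: "'a graph \<Rightarrow> 'a set \<Rightarrow> 'a graph" where
  "induced_subgraph G X = (X, edges G \<inter> (X \<times> X))"

definition hereditary :: "nat graph set \<Rightarrow> bool" where
  "hereditary C \<longleftrightarrow>
     (\<forall>G\<in>C. \<forall>G'. \<forall>f. is_graph G' \<and> graph_iso f G G' \<longrightarrow> G' \<in> C)
   \<and> (\<forall>G\<in>C. \<forall>X. X \<subseteq> verts G \<longrightarrow> induced_subgraph G X \<in> C)"

definition closed_nbhd :: "'a graph \<Rightarrow> 'a \<Rightarrow> 'a set" where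
  "closed_nbhd G v = insert v {u. (v, u) \<in> edges G}"

definition shattered :: "'a graph \<Rightarrow> 'a set \<Rightarrow> bool" where
  "shattered G X \<longleftrightarrow> X \<subseteq> verts G \<and>
     (\<forall>S\<subseteq>X. \<exists>v\<in>verts G. closed_nbhd G v \<inter> X = S)"

definition infinite_VC_dim :: "'a graph set \<Rightarrow> bool" where
  "infinite_VC_dim C \<longleftrightarrow> (\<forall>k::nat. \<exists>G\<in>C. \<exists>X. shattered G X \<and> finite X \<and> card X \<ge> k)"

definition bipartite_with :: "'a graph \<Rightarrow> 'a set \<Rightarrow> 'a set \<Rightarrow> bool" where
  "bipartite_with H A B \<longleftrightarrow> is_graph H \<and> A \<union> B = verts H \<and> A \<inter> B = {}
     \<and> (\<forall>u v. (u, v) \<in> edges H \<longrightarrow> (u \<in> A \<and> v \<in> B) \<or> (u \<in> B \<and> v \<in> A))"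

definition bipartisation :: "'a graph \<Rightarrow> 'a set \<Rightarrow> 'a set \<Rightarrow> 'a graph" where
  "bipartisation G A' B' = (verts G,
     {(u, v) \<in> edges G. (u \<in> A' \<and> v \<in> B') \<or> (u \<in> B' \<and> v \<in> A')})"

end

theory Submission
  imports Defs
begin

(* Let H = (A \<union> B, E) be bipartite and m = |B|.  Take a graph G in the
   class with a shattered set X of size at least (m+1)|A| + |B|, and identify
   inside X disjoint labelled copies  (i, a), i \<le> m, a \<in> A,  and markers  b \<in> B.
   For every b \<in> B shattering yields a vertex v b whose closed neighbourhood
   meets X exactly in the copies of the H-neighbours of b together with the
   marker of b; the markers force v to be injective.  The m vertices v b can meet
   at most m of the m+1 copies of A, so some copy i0 is untouched; the copy i0
   together with v ` B is then a "bipartite embedding" of H into G: two disjoint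
   injective images whose cross edges are exactly those of H.  The induced
   subgraph of G on these vertices lies in the class, and H is its bipartisation. *)

lemma Inl_in_Plus [simp]: "Inl a \<in> A <+> B \<longleftrightarrow> a \<in> A"
  and Inr_in_Plus [simp]: "Inr b \<in> A <+> B \<longleftrightarrow> b \<in> B"
  by auto

lemma graph_iso_inv:
  assumes "graph_iso f G H"
  shows "graph_iso (inv_into (verts G) f) H G"
  unfolding graph_iso_def
proof (intro conjI ballI)
  have bij: "bij_betw f (verts G) (verts H)" using assms unfolding graph_iso_def by blast
  then show "bij_betw (inv_into (verts G) f) (verts H) (verts G)"
    by (rule bij_betw_inv_into)
  fix u w assume uw: "u \<in> verts H" "w \<in> verts H"
  then have "inv_into (verts G) f u \<in> verts G" "inv_into (verts G) f w \<in> verts G"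
    "f (inv_into (verts G) f u) = u" "f (inv_into (verts G) f w) = w"
    using bij by (auto simp: bij_betw_def inv_into_into f_inv_into_f)
  then show "(u, w) \<in> edges H \<longleftrightarrow>
      (inv_into (verts G) f u, inv_into (verts G) f w) \<in> edges G"
    using assms unfolding graph_iso_def by metis
qed

text \<open>Edges inside either image are arbitrary.\<close>
definition bipartite_embedding ::
  "'b graph \<Rightarrow> 'b set \<Rightarrow> 'b set \<Rightarrow> 'a graph \<Rightarrow> ('b \<Rightarrow> 'a) \<Rightarrow> ('b \<Rightarrow> 'a) \<Rightarrow> bool" where
  "bipartite_embedding H A B G hA hB \<longleftrightarrow>
     inj_on hA A \<and> inj_on hB B \<and> hA ` A \<subseteq> verts G \<and> hB ` B \<subseteq> verts G
     \<and> hA ` A \<inter> hB ` B = {}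
     \<and> (\<forall>a\<in>A. \<forall>b\<in>B. (hA a, hB b) \<in> edges G \<longleftrightarrow> (a, b) \<in> edges H)"

lemma bipartite_embedding_iso:
  assumes H: "bipartite_with H A B" and G: "is_graph G"
    and emb: "bipartite_embedding H A B G hA hB"
  defines "h \<equiv> \<lambda>x. if x \<in> A then hA x else hB x"
  shows "graph_iso h H (bipartisation (induced_subgraph G (hA ` A \<union> hB ` B)) (hA ` A) (hB ` B))"
proof -
  let ?A' = "hA ` A" and ?B' = "hB ` B"
  let ?G = "bipartisation (induced_subgraph G (?A' \<union> ?B')) ?A' ?B'"
  have AB: "A \<union> B = verts H" and disj: "A \<inter> B = {}"
    and Hbip: "\<And>u v. (u, v) \<in> edges H \<Longrightarrow> (u \<in> A \<and> v \<in> B) \<or> (u \<in> B \<and> v \<in> A)"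
    and Hsym: "\<And>u v. (u, v) \<in> edges H \<Longrightarrow> (v, u) \<in> edges H"
    using H unfolding bipartite_with_def is_graph_def by blast+
  have Gsym: "\<And>u v. (u, v) \<in> edges G \<Longrightarrow> (v, u) \<in> edges G"
    using G unfolding is_graph_def by blast
  have injA: "inj_on hA A" and injB: "inj_on hB B" and sides: "?A' \<inter> ?B' = {}"
    and cross: "\<And>a b. a \<in> A \<Longrightarrow> b \<in> B \<Longrightarrow> (hA a, hB b) \<in> edges G \<longleftrightarrow> (a, b) \<in> edges H"
    using emb unfolding bipartite_embedding_def by blast+
  have hA: "h x = hA x" if "x \<in> A" for x using that unfolding h_def by simp
  have hB: "h x = hB x" if "x \<in> B" for x using that disj unfolding h_def by auto
  have hA': "h ` A = ?A'" and hB': "h ` B = ?B'" using hA hB by (auto cong: image_cong)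
  have "inj_on h A" using inj_on_cong[of A h hA] hA injA by blast
  moreover have "inj_on h B" using inj_on_cong[of B h hB] hB injB by blast
  moreover have "h ` (A - B) \<inter> h ` (B - A) = {}"
    using hA' hB' sides by (metis Diff_subset image_mono Int_mono subset_empty)
  ultimately have inj: "inj_on h (A \<union> B)" by (simp add: inj_on_Un)
  have vG: "verts ?G = ?A' \<union> ?B'"
    unfolding bipartisation_def induced_subgraph_def verts_def by simp
  have eG: "(h x, h y) \<in> edges ?G \<longleftrightarrow> (h x, h y) \<in> edges G \<and>
      ((x \<in> A \<and> y \<in> B) \<or> (x \<in> B \<and> y \<in> A))" if "x \<in> A \<union> B" "y \<in> A \<union> B" for x y
    using that hA' hB' sides disj
    unfolding bipartisation_def induced_subgraph_def edges_def by (auto simp: image_iff)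
  have edge: "(x, y) \<in> edges H \<longleftrightarrow> (h x, h y) \<in> edges ?G"
    if xy: "x \<in> A \<union> B" "y \<in> A \<union> B" for x y
  proof -
    consider "x \<in> A" "y \<in> B" | "x \<in> B" "y \<in> A" | "x \<in> A" "y \<in> A" | "x \<in> B" "y \<in> B"
      using xy by blast
    then show ?thesis
    proof cases
      case 1
      then show ?thesis using cross[OF 1] hA hB eG[OF xy] by simp
    next
      case 2
      then have "(x, y) \<in> edges H \<longleftrightarrow> (h y, h x) \<in> edges G"
        using cross[OF 2(2,1)] hA hB Hsym by auto
      then show ?thesis using 2 eG[OF xy] Gsym by blast
    next
      case 3
      then show ?thesis using eG[OF xy] Hbip disj by blast
    next
      case 4
      then show ?thesis using eG[OF xy] Hbip disj by blast
    qed
  qed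
  show ?thesis
    unfolding graph_iso_def
  proof (intro conjI ballI)
    show "bij_betw h (verts H) (verts ?G)"
      using inj hA' hB' vG unfolding AB[symmetric] bij_betw_def by (simp add: image_Un)
    fix x y assume "x \<in> verts H" "y \<in> verts H"
    then show "(x, y) \<in> edges H \<longleftrightarrow> (h x, h y) \<in> edges ?G" using AB edge by blast
  qed
qed

lemma bipartite_embedding_bipartisation:
  assumes H: "bipartite_with H A B" and G: "is_graph G"
    and emb: "bipartite_embedding H A B G hA hB"
  shows "\<exists>f. graph_iso f (bipartisation (induced_subgraph G (hA ` A \<union> hB ` B)) (hA ` A) (hB ` B)) H
           \<and> f ` hA ` A = A \<and> f ` hB ` B = B"
proof -
  define h where "h = (\<lambda>x. if x \<in> A then hA x else hB x)"
  have iso: "graph_iso h H (bipartisation (induced_subgraph G (hA ` A \<union> hB ` B)) (hA ` A) (hB ` B))"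
    using bipartite_embedding_iso[OF H G emb] unfolding h_def .
  have AB: "verts H = A \<union> B" and disj: "A \<inter> B = {}"
    using H unfolding bipartite_with_def by auto
  have inj: "inj_on h (A \<union> B)" using iso AB unfolding graph_iso_def bij_betw_def by simp
  have "h ` A = hA ` A" "h ` B = hB ` B"
    using disj unfolding h_def by (auto simp: image_iff)
  moreover have "inv_into (A \<union> B) h ` h ` S = S" if "S \<subseteq> A \<union> B" for S
    using inv_into_image_cancel[OF inj that] .
  ultimately show ?thesis
    using graph_iso_inv[OF iso] AB by (metis Un_upper1 Un_upper2)
qed

lemma shattered_transfer:
  assumes sh: "shattered G X" and "finite X" "finite D" "card D \<le> card X"
  obtains \<phi> where "inj_on \<phi> D" "\<phi> ` D \<subseteq> X"
    "\<And>S. S \<subseteq> D \<Longrightarrow> \<exists>w\<in>verts G. \<forall>d\<in>D. \<phi> d \<in> closed_nbhd G w \<longleftrightarrow> d \<in> S"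
proof -
  obtain \<phi> where inj: "inj_on \<phi> D" and into: "\<phi> ` D \<subseteq> X"
    using card_le_inj[OF assms(3,2,4)] by blast
  have "\<exists>w\<in>verts G. \<forall>d\<in>D. \<phi> d \<in> closed_nbhd G w \<longleftrightarrow> d \<in> S" if "S \<subseteq> D" for S
  proof -
    obtain w where "w \<in> verts G" and w: "closed_nbhd G w \<inter> X = \<phi> ` S"
      using sh \<open>S \<subseteq> D\<close> into unfolding shattered_def by (meson image_mono order_trans)
    moreover have "\<phi> d \<in> closed_nbhd G w \<longleftrightarrow> d \<in> S" if "d \<in> D" for d
      using w into that inj_on_image_mem_iff[OF inj that \<open>S \<subseteq> D\<close>] by blast
    ultimately show ?thesis by blast
  qed
  with inj into that show thesis by blast
qed

lemma shattered_realise_family: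
  assumes "shattered G X" "finite X" "finite D" "card D \<le> card X"
    and TD: "\<And>b. b \<in> B \<Longrightarrow> T b \<subseteq> D"
  obtains \<phi> v where "inj_on \<phi> D" "\<phi> ` D \<subseteq> X" "\<And>b. b \<in> B \<Longrightarrow> v b \<in> verts G"
    "\<And>b d. b \<in> B \<Longrightarrow> d \<in> D \<Longrightarrow> \<phi> d \<in> closed_nbhd G (v b) \<longleftrightarrow> d \<in> T b"
proof -
  obtain \<phi> where inj: "inj_on \<phi> D" and into: "\<phi> ` D \<subseteq> X"
    and cut: "\<And>S. S \<subseteq> D \<Longrightarrow> \<exists>w\<in>verts G. \<forall>d\<in>D. \<phi> d \<in> closed_nbhd G w \<longleftrightarrow> d \<in> S"
    using shattered_transfer[OF assms(1-4)] by blast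
  have "\<forall>b\<in>B. \<exists>w. w \<in> verts G \<and> (\<forall>d\<in>D. \<phi> d \<in> closed_nbhd G w \<longleftrightarrow> d \<in> T b)"
  proof
    fix b assume "b \<in> B"
    from cut[OF TD[OF this]]
    show "\<exists>w. w \<in> verts G \<and> (\<forall>d\<in>D. \<phi> d \<in> closed_nbhd G w \<longleftrightarrow> d \<in> T b)" by blast
  qed
  then obtain v where "\<forall>b\<in>B. v b \<in> verts G \<and> (\<forall>d\<in>D. \<phi> d \<in> closed_nbhd G (v b) \<longleftrightarrow> d \<in> T b)"
    by (rule bchoice[THEN exE])
  with inj into that show thesis by blast
qed

lemma edge_iff_closed_nbhd:
  assumes "is_graph G" "u \<noteq> w"
  shows "(u, w) \<in> edges G \<longleftrightarrow> u \<in> closed_nbhd G w"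
  using assms unfolding is_graph_def closed_nbhd_def by blast

lemma disjoint_family_avoids:
  assumes "finite S" "card S \<le> m"
    and disj: "\<And>i j. i \<le> m \<Longrightarrow> j \<le> m \<Longrightarrow> i \<noteq> j \<Longrightarrow> F i \<inter> F j = {}"
  shows "\<exists>i\<le>m. F i \<inter> S = {}"
proof (rule ccontr)
  assume "\<not> ?thesis"
  then have "\<forall>i\<in>{..m}. \<exists>s. s \<in> F i \<inter> S" by blast
  then obtain g where g: "\<And>i. i \<le> m \<Longrightarrow> g i \<in> F i \<inter> S" by (metis atMost_iff)
  have "inj_on g {..m}"
  proof (rule inj_onI)
    fix i j assume ij: "i \<in> {..m}" "j \<in> {..m}" "g i = g j"
    show "i = j"
    proof (rule ccontr)
      assume "i \<noteq> j"
      then have "F i \<inter> F j = {}" using disj ij by simp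
      moreover have "g i \<in> F i \<inter> F j" using g ij by (metis Int_iff atMost_iff)
      ultimately show False by blast
    qed
  qed
  moreover have "g ` {..m} \<subseteq> S" using g by blast
  ultimately have "card {..m} \<le> card S" using \<open>finite S\<close> by (metis card_inj_on_le)
  then show False using assms(2) by simp
qed

lemma shattered_bipartite_embedding:
  assumes H: "bipartite_with H A B" and G: "is_graph G"
    and sh: "shattered G X" and finX: "finite X"
    and large: "(card B + 1) * card A + card B \<le> card X"
  shows "\<exists>hA hB. bipartite_embedding H A B G hA hB"
proof -
  have finA: "finite A" and finB: "finite B"
    using H unfolding bipartite_with_def is_graph_def by (metis finite_Un)+
  define m where "m = card B"
  define D where "D = ({..m} \<times> A) <+> B"
  \<comment> \<open>T b: all copies of the H-neighbours of b, plus the marker of b\<close>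
  define T where "T b = ({..m} \<times> {a\<in>A. (a, b) \<in> edges H}) <+> {b}" for b
  have finD: "finite D" unfolding D_def using finA finB by simp
  have "card D = (card B + 1) * card A + card B"
    unfolding D_def m_def using finA finB by (simp add: card_Plus card_cartesian_product)
  with large have "card D \<le> card X" by simp
  moreover have "T b \<subseteq> D" if "b \<in> B" for b using that unfolding T_def D_def by auto
  ultimately obtain \<phi> v where inj: "inj_on \<phi> D" and into: "\<phi> ` D \<subseteq> X"
    and v: "\<And>b. b \<in> B \<Longrightarrow> v b \<in> verts G"
    and nb: "\<And>b d. b \<in> B \<Longrightarrow> d \<in> D \<Longrightarrow> \<phi> d \<in> closed_nbhd G (v b) \<longleftrightarrow> d \<in> T b"
    by (rule shattered_realise_family[OF sh finX finD]) blast+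
  define copy where "copy i a = \<phi> (Inl (i, a))" for i a
  have inl: "Inl (i, a) \<in> D" if "i \<le> m" "a \<in> A" for i a
    using that unfolding D_def by auto
  have inr: "Inr b \<in> D" if "b \<in> B" for b
    using that unfolding D_def by auto
  \<comment> \<open>the marker of b lies in the neighbourhood of v b' only for b' = b\<close>
  have injv: "inj_on v B"
  proof (rule inj_onI)
    fix b b' assume b: "b \<in> B" "b' \<in> B" "v b = v b'"
    have "\<phi> (Inr b) \<in> closed_nbhd G (v b)"
      using nb[OF b(1) inr[OF b(1)]] by (simp add: T_def)
    then have "Inr b \<in> T b'" using nb[OF b(2) inr[OF b(1)]] b(3) by simp
    then show "b = b'" by (simp add: T_def)
  qed
  have "\<exists>i\<le>m. copy i ` A \<inter> v ` B = {}"
  proof (rule disjoint_family_avoids)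
    show "finite (v ` B)" using finB by (rule finite_imageI)
    show "card (v ` B) \<le> m" unfolding m_def by (rule card_image_le[OF finB])
    show "copy i ` A \<inter> copy j ` A = {}" if "i \<le> m" "j \<le> m" "i \<noteq> j" for i j
    proof -
      have "\<phi> (Inl (i, a)) \<noteq> \<phi> (Inl (j, a'))" if "a \<in> A" "a' \<in> A" for a a'
        using inj_on_eq_iff[OF inj inl[OF \<open>i \<le> m\<close> that(1)] inl[OF \<open>j \<le> m\<close> that(2)]]
          \<open>i \<noteq> j\<close> by simp
      then show ?thesis by (auto simp: copy_def)
    qed
  qed
  then obtain i0 where i0: "i0 \<le> m" and sides: "copy i0 ` A \<inter> v ` B = {}" by blast
  have "bipartite_embedding H A B G (copy i0) v"
    unfolding bipartite_embedding_def
  proof (intro conjI ballI)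
    show "inj_on (copy i0) A"
      using inj inl i0 unfolding copy_def by (auto simp: inj_on_def)
    show "inj_on v B" by (rule injv)
    show "v ` B \<subseteq> verts G" using v by blast
    show "copy i0 ` A \<inter> v ` B = {}" by (rule sides)
    show "copy i0 ` A \<subseteq> verts G"
      using into inl i0 sh unfolding copy_def shattered_def by auto
    fix a b assume ab: "a \<in> A" "b \<in> B"
    have ne: "copy i0 a \<noteq> v b" using sides ab by blast
    have "(copy i0 a, v b) \<in> edges G \<longleftrightarrow> copy i0 a \<in> closed_nbhd G (v b)"
      using edge_iff_closed_nbhd[OF G ne] .
    also have "\<dots> \<longleftrightarrow> (a, b) \<in> edges H"
      using nb[OF ab(2) inl[OF i0 ab(1)]] i0 ab unfolding copy_def T_def by auto
    finally show "(copy i0 a, v b) \<in> edges G \<longleftrightarrow> (a, b) \<in> edges H" .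
  qed
  then show ?thesis by blast
qed

theorem mainTheorem5:
  fixes C :: "nat graph set" and H :: "'b graph" and A B :: "'b set"
  assumes "\<forall>G\<in>C. is_graph G"
    and "hereditary C"
    and "infinite_VC_dim C"
    and "bipartite_with H A B"
  shows "\<exists>G\<in>C. \<exists>A' B'. A' \<union> B' = verts G \<and> A' \<inter> B' = {} \<and>
           (\<exists>f. graph_iso f (bipartisation G A' B') H \<and> f ` A' = A \<and> f ` B' = B)"
proof -
  obtain G X where GC: "G \<in> C" and sh: "shattered G X" and finX: "finite X"
    and large: "card X \<ge> (card B + 1) * card A + card B"
    using assms(3) unfolding infinite_VC_dim_def by blast
  have G: "is_graph G" using assms(1) GC by blast
  obtain hA hB where emb: "bipartite_embedding H A B G hA hB"
    using shattered_bipartite_embedding[OF assms(4) G sh finX large] by blast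
  let ?A' = "hA ` A" and ?B' = "hB ` B"
  let ?G' = "induced_subgraph G (?A' \<union> ?B')"
  have inG: "?A' \<subseteq> verts G" "?B' \<subseteq> verts G" and sides: "?A' \<inter> ?B' = {}"
    using emb unfolding bipartite_embedding_def by simp_all
  from inG have "?A' \<union> ?B' \<subseteq> verts G" by (rule Un_least)
  moreover have "\<forall>G\<in>C. \<forall>X. X \<subseteq> verts G \<longrightarrow> induced_subgraph G X \<in> C"
    using assms(2) unfolding hereditary_def by (rule conjunct2)
  ultimately have G'C: "?G' \<in> C" using GC by blast
  have vG': "?A' \<union> ?B' = verts ?G'"
    unfolding induced_subgraph_def verts_def by simp
  obtain f where iso: "graph_iso f (bipartisation ?G' ?A' ?B') H"
    and fA: "f ` ?A' = A" and fB: "f ` ?B' = B"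
    using bipartite_embedding_bipartisation[OF assms(4) G emb] by blast
  have "\<exists>A' B'. A' \<union> B' = verts ?G' \<and> A' \<inter> B' = {} \<and>
      (\<exists>f. graph_iso f (bipartisation ?G' A' B') H \<and> f ` A' = A \<and> f ` B' = B)"
    by (intro exI[of _ ?A'] exI[of _ ?B'] exI[of _ f] conjI vG' sides iso fA fB)
  with G'C show ?thesis by blast
qed

end
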